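(* Assume $\bar p=\mu\cdot\mathbf p=1/2$ and let $\eta$ be any distribution on $\mathcal R$. With $\mathbf r,\tilde{\mathbf r},\nu,\tilde\nu,\delta,\tilde\delta$ as in the context, $\nu=\tilde\nu$ and $\delta+\tilde\delta=1-2/\nu$.
   Context: Let $\mathcal R=\{1,\dots,N\}$ and let $K$ be a stochastic matrix on $\mathcal R$ whose Markov chain has a unique closed irreducible subset; let $\mu$ (row vector) be its unique stationary distribution. Fix $p:\mathcal R\to(0,1)$, $\mathbf p=(p(1),\dots,p(N))^t$, $\mathbf 1$ the all-ones column vector, $I$ the identity, $D_p$ the diagonal matrix with entries $p(i)$, $D_{1-p}=I-D_p$. Define $\mathbf r=(I-K+2(\mathbf 1-\mathbf p)\mu D_{1-p}K)^{-1}\mathbf p-\mathbf 1$, $\tilde{\mathbf r}=(I-K+2\mathbf p\,\mu D_pK)^{-1}(\mathbf 1-\mathbf p)-\mathbf 1$, $\nu=2+4\mu D_pK\mathbf r$, $\tilde\nu=2+4\mu D_{1-p}K\tilde{\mathbf r}$, $\delta=2\,\eta\cdot\mathbf r/\nu$, $\tilde\delta=2\,\eta\cdot\tilde{\mathbf r}/\tilde\nu$. *)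

theory Defs
  imports "HOL-Analysis.Analysis"
begin

text \<open>States R = {1..N} are modelled by an arbitrary finite type 'n.
  Column vectors and row vectors are both elements of real^'n; a matrix is real^'n^'n
  with rows indexed first (K$i$j = K(i,j)).\<close>

definition stochastic_matrix :: "real^'n^'n \<Rightarrow> bool" where
  "stochastic_matrix K \<longleftrightarrow> (\<forall>i j. K$i$j \<ge> 0) \<and> (\<forall>i. (\<Sum>j\<in>UNIV. K$i$j) = 1)"

definition prob_vector :: "real^'n \<Rightarrow> bool" where
  "prob_vector v \<longleftrightarrow> (\<forall>i. v$i \<ge> 0) \<and> (\<Sum>i\<in>UNIV. v$i) = 1"

definition trans_rel :: "real^'n^'n \<Rightarrow> ('n \<times> 'n) set" where
  "trans_rel K = {(i,j). K$i$j > 0}"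

definition closed_set :: "real^'n^'n \<Rightarrow> 'n set \<Rightarrow> bool" where
  "closed_set K C \<longleftrightarrow> C \<noteq> {} \<and> (\<forall>i\<in>C. \<forall>j. K$i$j > 0 \<longrightarrow> j \<in> C)"

definition irreducible_set :: "real^'n^'n \<Rightarrow> 'n set \<Rightarrow> bool" where
  "irreducible_set K C \<longleftrightarrow> (\<forall>i\<in>C. \<forall>j\<in>C. (i, j) \<in> (trans_rel K)\<^sup>*)"

definition unique_closed_irreducible :: "real^'n^'n \<Rightarrow> bool" where
  "unique_closed_irreducible K \<longleftrightarrow> (\<exists>!C. closed_set K C \<and> irreducible_set K C)"

definition stationary_dist :: "real^'n^'n \<Rightarrow> real^'n \<Rightarrow> bool" where
  "stationary_dist K \<mu> \<longleftrightarrow> prob_vector \<mu> \<and> \<mu> v* K = \<mu>"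

definition diag_mat :: "real^'n \<Rightarrow> real^'n^'n" where
  "diag_mat v = (\<chi> i j. if i = j then v$i else 0)"

definition outer :: "real^'n \<Rightarrow> real^'n \<Rightarrow> real^'n^'n" where
  "outer a b = (\<chi> i j. a$i * b$j)"

definition ones :: "real^'n" where "ones = (\<chi> i. 1)"

definition rvec :: "real^'n^'n \<Rightarrow> real^'n \<Rightarrow> real^'n \<Rightarrow> real^'n" where
  "rvec K \<mu> p = matrix_inv (mat 1 - K + 2 *\<^sub>R outer (ones - p) (\<mu> v* (diag_mat (ones - p) ** K)))
                   *v p - ones"

definition rtvec :: "real^'n^'n \<Rightarrow> real^'n \<Rightarrow> real^'n \<Rightarrow> real^'n" where
  "rtvec K \<mu> p = matrix_inv (mat 1 - K + 2 *\<^sub>R outer p (\<mu> v* (diag_mat p ** K)))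
                   *v (ones - p) - ones"

definition nu :: "real^'n^'n \<Rightarrow> real^'n \<Rightarrow> real^'n \<Rightarrow> real" where
  "nu K \<mu> p = 2 + 4 * ((\<mu> v* (diag_mat p ** K)) \<bullet> rvec K \<mu> p)"

definition nut :: "real^'n^'n \<Rightarrow> real^'n \<Rightarrow> real^'n \<Rightarrow> real" where
  "nut K \<mu> p = 2 + 4 * ((\<mu> v* (diag_mat (ones - p) ** K)) \<bullet> rtvec K \<mu> p)"

definition delta :: "real^'n^'n \<Rightarrow> real^'n \<Rightarrow> real^'n \<Rightarrow> real^'n \<Rightarrow> real" where
  "delta K \<mu> p \<eta> = 2 * (\<eta> \<bullet> rvec K \<mu> p) / nu K \<mu> p"

definition deltat :: "real^'n^'n \<Rightarrow> real^'n \<Rightarrow> real^'n \<Rightarrow> real^'n \<Rightarrow> real" where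
  "deltat K \<mu> p \<eta> = 2 * (\<eta> \<bullet> rtvec K \<mu> p) / nut K \<mu> p"

end

theory Submission
  imports Defs
begin

text \<open>Swapping \<open>p\<close> and \<open>1 - p\<close> exchanges \<open>r\<close> with \<open>r\<^sup>~\<close> and \<open>\<nu>\<close> with \<open>\<nu>\<^sup>~\<close>, so it suffices to
  understand \<open>r\<close>. Applying \<open>\<mu>\<close> to the defining linear system shows that \<open>r\<close> solves the Poisson
  equation \<open>r - K r = 2p - 1\<close>, and \<open>r\<^sup>~\<close> the one with right-hand side \<open>1 - 2p\<close>. Hence \<open>r + r\<^sup>~\<close> is
  harmonic, and since the chain has a single closed class it is a constant \<open>c\<close>; both \<open>\<nu>\<close> and \<open>\<nu>\<^sup>~\<close>
  equal \<open>2 + 2c\<close>, and \<open>\<delta> + \<delta>\<^sup>~ = 2c/\<nu>\<close>. The only remaining point is \<open>\<nu> \<noteq> 0\<close>: Jensen's inequality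
  \<open>(K r)\<^sup>2 \<le> K (r\<^sup>2)\<close> integrated against \<open>\<mu>\<close> gives \<open>\<nu> \<ge> 8 \<Sum>\<^sub>i \<mu>\<^sub>i p\<^sub>i (1 - p\<^sub>i) > 0\<close>.\<close>

lemma matrix_vector_mult_component:
  "((M::real^'n^'m) *v x)$i = (\<Sum>j\<in>UNIV. M$i$j * x$j)"
  by (simp add: matrix_vector_mult_def)

lemma stochastic_matrix_mult_ones:
  "stochastic_matrix K \<Longrightarrow> K *v ones = ones"
  by (simp add: vec_eq_iff matrix_vector_mult_component ones_def stochastic_matrix_def)

lemma stochastic_matrix_jensen:
  fixes K :: "real^'n^'n"
  assumes "stochastic_matrix K"
  shows "((K *v x)$i)\<^sup>2 \<le> (K *v (\<chi> j. (x$j)\<^sup>2))$i"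
proof -
  define m where "m = (K *v x)$i"
  have row_sum: "(\<Sum>j\<in>UNIV. K$i$j) = 1" and nonneg: "\<And>j. K$i$j \<ge> 0"
    using assms by (auto simp: stochastic_matrix_def)
  have "0 \<le> (\<Sum>j\<in>UNIV. K$i$j * (x$j - m)\<^sup>2)"
    by (rule sum_nonneg) (simp add: nonneg)
  also have "\<dots> = (\<Sum>j\<in>UNIV. K$i$j * (x$j)\<^sup>2) - 2*m*(\<Sum>j\<in>UNIV. K$i$j * x$j)
      + m\<^sup>2 * (\<Sum>j\<in>UNIV. K$i$j)"
    by (simp add: power2_eq_square algebra_simps sum.distrib sum_subtractf
        sum_distrib_left sum_distrib_right)
  also have "\<dots> = (K *v (\<chi> j. (x$j)\<^sup>2))$i - m\<^sup>2"
    by (simp add: row_sum matrix_vector_mult_component m_def power2_eq_square)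
  finally show ?thesis by (simp add: m_def)
qed

lemma stationary_dist_inner_mult:
  "stationary_dist K \<mu> \<Longrightarrow> \<mu> \<bullet> (K *v z) = \<mu> \<bullet> z"
  by (simp add: stationary_dist_def dot_lmul_matrix[symmetric])

lemma prob_vector_inner_ones: "prob_vector v \<Longrightarrow> v \<bullet> ones = 1"
  by (simp add: prob_vector_def inner_vec_def ones_def)

lemma stationary_dist_inner_ones_diff:
  "stationary_dist K \<mu> \<Longrightarrow> \<mu> \<bullet> (ones - p) = 1 - \<mu> \<bullet> p"
  by (simp add: stationary_dist_def prob_vector_inner_ones inner_diff_right)

text \<open>A closed class is obtained as the set reachable from a state whose reachable set has
  minimal cardinality.\<close>

lemma closed_set_contains_closed_irreducible:
  fixes K :: "real^'n^'n"
  assumes "i0 \<in> S" and closed: "\<forall>i\<in>S. \<forall>j. K$i$j > 0 \<longrightarrow> j \<in> S"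
  shows "\<exists>C\<subseteq>S. closed_set K C \<and> irreducible_set K C"
proof -
  define R where "R i = {j. (i,j) \<in> (trans_rel K)\<^sup>*}" for i
  have R_subset: "R i \<subseteq> S" if "i \<in> S" for i
  proof
    fix j assume "j \<in> R i"
    then have "(i,j) \<in> (trans_rel K)\<^sup>*" by (simp add: R_def)
    then show "j \<in> S"
      by (induction rule: rtrancl_induct) (use that closed in \<open>auto simp: trans_rel_def\<close>)
  qed
  obtain i where "i \<in> S" and i_min: "\<forall>y. y \<in> S \<longrightarrow> card (R i) \<le> card (R y)"
    using ex_has_least_nat[of "\<lambda>i. i \<in> S" i0 "\<lambda>i. card (R i)"] assms(1) by blast
  have "closed_set K (R i)"
    by (auto simp: closed_set_def R_def trans_rel_def intro: rtrancl_into_rtrancl)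
  moreover have "irreducible_set K (R i)"
    unfolding irreducible_set_def
  proof (intro ballI)
    fix j k assume j: "j \<in> R i" and k: "k \<in> R i"
    have "card (R i) \<le> card (R j)" using i_min R_subset \<open>i \<in> S\<close> j by blast
    moreover have "R j \<subseteq> R i" using j by (auto simp: R_def)
    ultimately have "R j = R i" by (simp add: card_seteq)
    with k have "k \<in> R j" by simp
    then show "(j, k) \<in> (trans_rel K)\<^sup>*" by (simp add: R_def)
  qed
  ultimately show ?thesis using R_subset \<open>i \<in> S\<close> by blast
qed

text \<open>Maximum principle: the states where a harmonic vector is maximal form a closed set.\<close>

lemma harmonic_maximal_on_closed_irreducible:
  fixes K :: "real^'n^'n"
  assumes stoch: "stochastic_matrix K" and unique: "unique_closed_irreducible K"
    and harmonic: "K *v z = z" and C: "closed_set K C" "irreducible_set K C"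
    and "i \<in> C"
  shows "z$j \<le> z$i"
proof -
  define M where "M = Max (range (\<lambda>j. z$j))"
  have le_M: "z$j \<le> M" for j unfolding M_def by (rule Max_ge) auto
  have "M \<in> range (\<lambda>j. z$j)" unfolding M_def by (rule Max_in) auto
  then obtain i0 where i0: "z$i0 = M" by auto
  define S where "S = {i. z$i = M}"
  have "\<forall>i\<in>S. \<forall>j. K$i$j > 0 \<longrightarrow> j \<in> S"
  proof (intro ballI allI impI)
    fix i j assume "i \<in> S" and pos: "K$i$j > 0"
    have row_sum: "(\<Sum>j\<in>UNIV. K$i$j) = 1" and nonneg: "\<And>j. K$i$j \<ge> 0"
      using stoch by (auto simp: stochastic_matrix_def)
    have "(\<Sum>j\<in>UNIV. K$i$j * (M - z$j)) = M * (\<Sum>j\<in>UNIV. K$i$j) - (K *v z)$i"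
      by (simp add: matrix_vector_mult_component algebra_simps sum_subtractf sum_distrib_left)
    also have "\<dots> = 0" using row_sum harmonic \<open>i \<in> S\<close> by (simp add: S_def)
    finally have "\<forall>j\<in>UNIV. K$i$j * (M - z$j) = 0"
      by (subst sum_nonneg_eq_0_iff[symmetric]) (auto simp: nonneg le_M)
    then show "j \<in> S" using pos by (force simp: S_def)
  qed
  then obtain C' where "C' \<subseteq> S" "closed_set K C'" "irreducible_set K C'"
    using closed_set_contains_closed_irreducible[of i0 S K] i0 by (auto simp: S_def)
  moreover have "C' = C"
    using unique C \<open>closed_set K C'\<close> \<open>irreducible_set K C'\<close>
    unfolding unique_closed_irreducible_def by blast
  ultimately show ?thesis using le_M \<open>i \<in> C\<close> by (auto simp: S_def)
qed

lemma harmonic_vector_const: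
  fixes K :: "real^'n^'n"
  assumes stoch: "stochastic_matrix K" and unique: "unique_closed_irreducible K"
    and harmonic: "K *v z = z"
  shows "\<exists>c. z = c *\<^sub>R ones"
proof -
  obtain C where C: "closed_set K C" "irreducible_set K C"
    using unique unfolding unique_closed_irreducible_def by blast
  then obtain i where "i \<in> C" by (auto simp: closed_set_def)
  have "K *v (-z) = -z"
    using harmonic by (simp add: vec_eq_iff matrix_vector_mult_component sum_negf)
  then have "z$j = z$i" for j
    using harmonic_maximal_on_closed_irreducible[OF stoch unique _ C \<open>i \<in> C\<close>, of "-z" j]
      harmonic_maximal_on_closed_irreducible[OF stoch unique harmonic C \<open>i \<in> C\<close>, of j]
    by simp
  then show ?thesis by (intro exI[of _ "z$i"]) (simp add: vec_eq_iff ones_def)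
qed

lemma matrix_inv_mult_vector:
  fixes A :: "real^'n^'n"
  assumes "\<forall>z. A *v z = 0 \<longrightarrow> z = 0"
  shows "A *v (matrix_inv A *v v) = v"
proof -
  have "invertible A"
    using assms matrix_left_invertible_ker invertible_left_inverse by blast
  then have "A ** matrix_inv A = mat 1 \<and> matrix_inv A ** A = mat 1"
    unfolding invertible_def matrix_inv_def by (rule someI_ex)
  then show ?thesis by (simp add: matrix_vector_mul_assoc)
qed

lemma rank_one_perturbation_mult:
  fixes K :: "real^'n^'n"
  shows "(mat 1 - K + 2 *\<^sub>R outer u w) *v z = z - K *v z + (2 * (w \<bullet> z)) *\<^sub>R u"
proof -
  have "b * (if P then 1 else 0) = (if P then b else 0)" for b :: real and P by simp
  then show ?thesis
    by (simp add: vec_eq_iff matrix_vector_mult_def outer_def mat_def inner_vec_def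
        algebra_simps sum.distrib sum_subtractf sum_distrib_left sum_distrib_right)
qed

lemma rank_one_perturbation_ker:
  fixes K :: "real^'n^'n"
  assumes stoch: "stochastic_matrix K" and unique: "unique_closed_irreducible K"
    and stat: "stationary_dist K \<mu>" and "\<mu> \<bullet> u \<noteq> 0" and "w \<bullet> ones \<noteq> 0"
  shows "\<forall>z. (mat 1 - K + 2 *\<^sub>R outer u w) *v z = 0 \<longrightarrow> z = 0"
proof (intro allI impI)
  fix z assume "(mat 1 - K + 2 *\<^sub>R outer u w) *v z = 0"
  then have eq: "z - K *v z + (2 * (w \<bullet> z)) *\<^sub>R u = 0" by (simp add: rank_one_perturbation_mult)
  then have "\<mu> \<bullet> (z - K *v z + (2 * (w \<bullet> z)) *\<^sub>R u) = 0" by simp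
  then have "w \<bullet> z = 0"
    using \<open>\<mu> \<bullet> u \<noteq> 0\<close> by (simp add: inner_diff_right inner_add_right stationary_dist_inner_mult[OF stat])
  with eq have "K *v z = z" by simp
  then obtain c where "z = c *\<^sub>R ones" using harmonic_vector_const[OF stoch unique] by blast
  with \<open>w \<bullet> z = 0\<close> \<open>w \<bullet> ones \<noteq> 0\<close> show "z = 0" by simp
qed

lemma weighted_row_inner:
  fixes K :: "real^'n^'n"
  shows "(\<mu> v* (diag_mat q ** K)) \<bullet> z = (\<Sum>i\<in>UNIV. \<mu>$i * q$i * (K *v z)$i)"
proof -
  have "(\<mu> v* (diag_mat q ** K)) \<bullet> z = \<mu> \<bullet> (diag_mat q *v (K *v z))"
    by (simp add: dot_lmul_matrix matrix_vector_mul_assoc)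
  also have "diag_mat q *v (K *v z) = (\<chi> i. q$i * (K *v z)$i)"
  proof -
    have "(if P then a else 0) * b = (if P then a * b else 0)" for P and a b :: real by simp
    then show ?thesis by (simp add: vec_eq_iff matrix_vector_mult_def diag_mat_def)
  qed
  finally show ?thesis by (simp add: inner_vec_def mult.assoc)
qed

lemma weighted_row_inner_ones:
  assumes "stochastic_matrix K"
  shows "(\<mu> v* (diag_mat q ** K)) \<bullet> ones = \<mu> \<bullet> q"
  unfolding weighted_row_inner stochastic_matrix_mult_ones[OF assms]
  by (simp add: inner_vec_def ones_def)

lemma rtvec_eq_rvec: "rtvec K \<mu> p = rvec K \<mu> (ones - p)"
  by (simp add: rtvec_def rvec_def)

lemma rvec_poisson:
  fixes K :: "real^'n^'n"
  assumes stoch: "stochastic_matrix K" and unique: "unique_closed_irreducible K"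
    and stat: "stationary_dist K \<mu>" and half: "\<mu> \<bullet> p = 1/2"
  shows "(\<mu> v* (diag_mat (ones - p) ** K)) \<bullet> rvec K \<mu> p = 0"
    and "rvec K \<mu> p - K *v rvec K \<mu> p = p - (ones - p)"
proof -
  define w where "w = \<mu> v* (diag_mat (ones - p) ** K)"
  define x where "x = matrix_inv (mat 1 - K + 2 *\<^sub>R outer (ones - p) w) *v p"
  have mu_ones: "\<mu> \<bullet> ones = 1"
    using stat by (simp add: stationary_dist_def prob_vector_inner_ones)
  have half': "\<mu> \<bullet> (ones - p) = 1/2"
    using half stationary_dist_inner_ones_diff[OF stat] by simp
  have "w \<bullet> ones = 1/2" using half' by (simp add: w_def weighted_row_inner_ones[OF stoch])
  then have "(mat 1 - K + 2 *\<^sub>R outer (ones - p) w) *v x = p"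
    unfolding x_def
    by (intro matrix_inv_mult_vector rank_one_perturbation_ker[OF stoch unique stat]) (simp_all add: half')
  then have eq: "x - K *v x + (2 * (w \<bullet> x)) *\<^sub>R (ones - p) = p"
    by (simp add: rank_one_perturbation_mult)
  then have "\<mu> \<bullet> (x - K *v x + (2 * (w \<bullet> x)) *\<^sub>R (ones - p)) = \<mu> \<bullet> p" by simp
  then have "w \<bullet> x = 1/2"
    by (simp add: inner_diff_right inner_add_right stationary_dist_inner_mult[OF stat] half mu_ones)
  moreover have "rvec K \<mu> p = x - ones" by (simp add: rvec_def x_def w_def)
  ultimately show "(\<mu> v* (diag_mat (ones - p) ** K)) \<bullet> rvec K \<mu> p = 0"
    using \<open>w \<bullet> ones = 1/2\<close> by (simp add: w_def inner_diff_right)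
  have "x - K *v x = p - (ones - p)" using eq \<open>w \<bullet> x = 1/2\<close> by (simp add: algebra_simps)
  then show "rvec K \<mu> p - K *v rvec K \<mu> p = p - (ones - p)"
    by (simp add: \<open>rvec K \<mu> p = x - ones\<close> matrix_vector_mult_diff_distrib
        stochastic_matrix_mult_ones[OF stoch])
qed

text \<open>With \<open>h = K r\<close> and \<open>f = 2p - 1\<close> we have \<open>r = h + f\<close>, and
  \<open>0 \<le> \<mu> (r\<^sup>2 - h\<^sup>2) = \<mu> (2 f h + f\<^sup>2)\<close>, where \<open>\<mu> (f h)\<close> is the \<open>\<nu>\<close>-term and \<open>\<mu> f\<^sup>2 = 1 - 4 \<mu> (p (1 - p))\<close>.\<close>

lemma poisson_weighted_lower_bound:
  fixes K :: "real^'n^'n"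
  assumes stoch: "stochastic_matrix K" and stat: "stationary_dist K \<mu>"
    and orth: "(\<mu> v* (diag_mat (ones - p) ** K)) \<bullet> r = 0"
    and poisson: "r - K *v r = p - (ones - p)"
  shows "8 * (\<Sum>i\<in>UNIV. \<mu>$i * p$i * (1 - p$i)) \<le> 2 + 4 * ((\<mu> v* (diag_mat p ** K)) \<bullet> r)"
proof -
  define h where "h = K *v r"
  define f where "f i = 2 * p$i - 1" for i
  have r_eq: "r$i = h$i + f i" for i
    using poisson by (simp add: vec_eq_iff h_def f_def ones_def algebra_simps)
  have mu_sum: "(\<Sum>i\<in>UNIV. \<mu>$i) = 1" and mu_nonneg: "\<And>i. \<mu>$i \<ge> 0"
    using stat by (auto simp: stationary_dist_def prob_vector_def)
  have "(\<mu> v* (diag_mat p ** K)) \<bullet> r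
      = (\<mu> v* (diag_mat p ** K)) \<bullet> r - (\<mu> v* (diag_mat (ones - p) ** K)) \<bullet> r"
    using orth by simp
  also have "\<dots> = (\<Sum>i\<in>UNIV. \<mu>$i * f i * h$i)"
    by (simp add: weighted_row_inner h_def f_def ones_def sum_subtractf[symmetric] algebra_simps)
  finally have nu_term: "(\<mu> v* (diag_mat p ** K)) \<bullet> r = (\<Sum>i\<in>UNIV. \<mu>$i * f i * h$i)" .
  have "0 \<le> (\<Sum>i\<in>UNIV. \<mu>$i * ((K *v (\<chi> j. (r$j)\<^sup>2))$i - (h$i)\<^sup>2))"
    using stochastic_matrix_jensen[OF stoch] by (intro sum_nonneg) (simp add: mu_nonneg h_def)
  also have "\<dots> = \<mu> \<bullet> (K *v (\<chi> j. (r$j)\<^sup>2)) - (\<Sum>i\<in>UNIV. \<mu>$i * (h$i)\<^sup>2)"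
    by (simp add: inner_vec_def algebra_simps sum_subtractf)
  also have "\<dots> = \<mu> \<bullet> (\<chi> j. (r$j)\<^sup>2) - (\<Sum>i\<in>UNIV. \<mu>$i * (h$i)\<^sup>2)"
    by (simp only: stationary_dist_inner_mult[OF stat])
  also have "\<dots> = (\<Sum>i\<in>UNIV. \<mu>$i * ((r$i)\<^sup>2 - (h$i)\<^sup>2))"
    by (simp add: inner_vec_def algebra_simps sum_subtractf)
  also have "\<dots> = 2 * (\<Sum>i\<in>UNIV. \<mu>$i * f i * h$i) + (\<Sum>i\<in>UNIV. \<mu>$i)
      - 4 * (\<Sum>i\<in>UNIV. \<mu>$i * p$i * (1 - p$i))"
    by (simp add: r_eq f_def power2_eq_square algebra_simps sum.distrib sum_subtractf
        sum_distrib_left)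
  finally show ?thesis using nu_term mu_sum by simp
qed

lemma stationary_dist_weighted_pos:
  assumes "stationary_dist K \<mu>" and "\<forall>i. 0 < p$i \<and> p$i < 1"
  shows "0 < (\<Sum>i\<in>UNIV. \<mu>$i * p$i * (1 - p$i))"
proof -
  have mu_sum: "(\<Sum>i\<in>UNIV. \<mu>$i) = 1" and mu_nonneg: "\<And>i. \<mu>$i \<ge> 0"
    using assms(1) by (auto simp: stationary_dist_def prob_vector_def)
  obtain i0 where "\<mu>$i0 \<noteq> 0" using mu_sum by (metis sum.neutral zero_neq_one)
  then have "0 < \<mu>$i0" using mu_nonneg[of i0] by simp
  then show ?thesis
    using assms(2) mu_nonneg by (intro sum_pos2[where i=i0]) (auto simp: less_imp_le)
qed

lemma rvec_add_rtvec_const: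
  fixes K :: "real^'n^'n"
  assumes stoch: "stochastic_matrix K" and unique: "unique_closed_irreducible K"
    and stat: "stationary_dist K \<mu>" and half: "\<mu> \<bullet> p = 1/2"
  obtains c where "rvec K \<mu> p + rtvec K \<mu> p = c *\<^sub>R ones"
proof -
  define r where "r = rvec K \<mu> p"
  define s where "s = rtvec K \<mu> p"
  have "\<mu> \<bullet> (ones - p) = 1/2"
    using half stationary_dist_inner_ones_diff[OF stat] by simp
  from rvec_poisson(2)[OF stoch unique stat this] rvec_poisson(2)[OF stoch unique stat half]
  have r_poisson: "r - K *v r = p - (ones - p)" and s_poisson: "s - K *v s = (ones - p) - p"
    by (simp_all add: r_def s_def rtvec_eq_rvec)
  have "K *v (r + s) = (r - (r - K *v r)) + (s - (s - K *v s))"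
    by (simp add: matrix_vector_right_distrib)
  also have "\<dots> = r + s"
    unfolding r_poisson s_poisson by (simp add: algebra_simps)
  finally show ?thesis
    using harmonic_vector_const[OF stoch unique] that by (auto simp: r_def s_def)
qed

lemma nu_nut_eq_of_rvec_add_rtvec:
  fixes K :: "real^'n^'n"
  assumes stoch: "stochastic_matrix K" and unique: "unique_closed_irreducible K"
    and stat: "stationary_dist K \<mu>" and half: "\<mu> \<bullet> p = 1/2"
    and sum: "rvec K \<mu> p + rtvec K \<mu> p = c *\<^sub>R ones"
  shows "nu K \<mu> p = 2 + 2 * c" and "nut K \<mu> p = 2 + 2 * c"
proof -
  define a where "a = \<mu> v* (diag_mat (ones - p) ** K)"
  define b where "b = \<mu> v* (diag_mat p ** K)"
  have half': "\<mu> \<bullet> (ones - p) = 1/2"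
    using half stationary_dist_inner_ones_diff[OF stat] by simp
  from rvec_poisson(1)[OF stoch unique stat half'] rvec_poisson(1)[OF stoch unique stat half]
  have "b \<bullet> rtvec K \<mu> p = 0" "a \<bullet> rvec K \<mu> p = 0"
    by (simp_all add: a_def b_def rtvec_eq_rvec)
  moreover have "a \<bullet> (rvec K \<mu> p + rtvec K \<mu> p) = c/2" "b \<bullet> (rvec K \<mu> p + rtvec K \<mu> p) = c/2"
    using half half' by (simp_all add: sum a_def b_def weighted_row_inner_ones[OF stoch])
  ultimately show "nu K \<mu> p = 2 + 2 * c" and "nut K \<mu> p = 2 + 2 * c"
    by (simp_all add: nu_def nut_def a_def b_def inner_add_right)
qed

lemma nu_pos:
  fixes K :: "real^'n^'n"
  assumes stoch: "stochastic_matrix K" and unique: "unique_closed_irreducible K"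
    and stat: "stationary_dist K \<mu>" and p: "\<forall>i. 0 < p$i \<and> p$i < 1" and half: "\<mu> \<bullet> p = 1/2"
  shows "0 < nu K \<mu> p"
  using poisson_weighted_lower_bound[OF stoch stat rvec_poisson[OF stoch unique stat half]]
    stationary_dist_weighted_pos[OF stat p]
  by (simp add: nu_def)

theorem proposition4p3:
  fixes K :: "real^'n^'n" and \<mu> p \<eta> :: "real^'n"
  assumes "stochastic_matrix K"
    and "unique_closed_irreducible K"
    and "stationary_dist K \<mu>"
    and "\<forall>i. 0 < p$i \<and> p$i < 1"
    and "\<mu> \<bullet> p = 1/2"
    and "prob_vector \<eta>"
  shows "nu K \<mu> p = nut K \<mu> p \<and>
         delta K \<mu> p \<eta> + deltat K \<mu> p \<eta> = 1 - 2 / nu K \<mu> p"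
proof -
  obtain c where c: "rvec K \<mu> p + rtvec K \<mu> p = c *\<^sub>R ones"
    using rvec_add_rtvec_const[OF assms(1-3,5)] by blast
  note nu = nu_nut_eq_of_rvec_add_rtvec[OF assms(1-3,5) c]
  have "\<eta> \<bullet> rvec K \<mu> p + \<eta> \<bullet> rtvec K \<mu> p = c"
    using c prob_vector_inner_ones[OF assms(6)] by (simp add: inner_add_right[symmetric])
  then have "delta K \<mu> p \<eta> + deltat K \<mu> p \<eta> = (nu K \<mu> p - 2) / nu K \<mu> p"
    by (simp add: delta_def deltat_def nu add_divide_distrib[symmetric])
  also have "\<dots> = 1 - 2 / nu K \<mu> p"
    using nu_pos[OF assms(1-5)] by (simp add: diff_divide_distrib)
  finally show ?thesis using nu by simp
qed

end
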